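(* Let $\mathcal{F}$ be a class of simple graphs and consider the assertions: (1) $\mathcal{F}$ is closed under deleting edges; (2) $\equiv_{\mathcal{F}}$ is preserved under taking full complements, i.e.\ for all simple graphs $G$ and $H$ it holds that $G\equiv_{\mathcal{F}}H$ if and only if $\widehat{G}\equiv_{\mathcal{F}}\widehat{H}$; (3) $\mathrm{cl}(\mathcal{F})$ is closed under deleting edges; (4) $\mathrm{cl}(\mathcal{F})$ is closed under taking subgraphs, i.e.\ under deleting edges and vertices; (5) $\equiv_{\mathrm{cl}(\mathcal{F})}$ is preserved under taking full complements. Then (1) implies (2), (2) implies (3), and (3), (4), (5) are pairwise equivalent.
   Context: Graphs are finite, undirected, without multiple edges, possibly with loops; simple means without loops. A homomorphism maps edges to edges (possibly loops) and looped vertices to looped vertices; $\hom(F,G)$ counts homomorphisms. $G\equiv_{\mathcal{F}}H$ means $\hom(F,G)=\hom(F,H)$ for all $F\in\mathcal{F}$. $\mathrm{cl}(\mathcal{F})$ is the class of all simple graphs $K$ such that for all simple $G,H$, $G\equiv_{\mathcal{F}}H$ implies $\hom(K,G)=\hom(K,H)$. The full complement $\widehat{G}$ of a graph $G$ has vertex set $V(G)$; for distinct $u,v$, $uv$ is an edge of $\widehat G$ iff it is not an edge of $G$, and $v$ has a loop in $\widehat G$ iff it has no loop in $G$. *)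

theory Defs
  imports Main "HOL-Library.FuncSet"
begin

text \<open>A graph is a pair (V, E) with vertices from nat: V finite, E a symmetric
  relation on V.  A loop at v is the pair (v,v) in E.\<close>

type_synonym graph = "nat set \<times> (nat \<times> nat) set"

definition verts :: "graph \<Rightarrow> nat set" where "verts G = fst G"
definition edges :: "graph \<Rightarrow> (nat \<times> nat) set" where "edges G = snd G"

definition is_graph :: "graph \<Rightarrow> bool" where
  "is_graph G \<longleftrightarrow> finite (verts G) \<and> edges G \<subseteq> verts G \<times> verts G \<and> sym (edges G)"

definition simple_graph :: "graph \<Rightarrow> bool" where
  "simple_graph G \<longleftrightarrow> is_graph G \<and> (\<forall>v. (v, v) \<notin> edges G)"

definition homs :: "graph \<Rightarrow> graph \<Rightarrow> (nat \<Rightarrow> nat) set" where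
  "homs F G = {f \<in> verts F \<rightarrow>\<^sub>E verts G. \<forall>(u, v) \<in> edges F. (f u, f v) \<in> edges G}"

definition hom :: "graph \<Rightarrow> graph \<Rightarrow> nat" where
  "hom F G = card (homs F G)"

definition hom_equiv :: "graph set \<Rightarrow> graph \<Rightarrow> graph \<Rightarrow> bool" where
  "hom_equiv \<F> G H \<longleftrightarrow> (\<forall>F \<in> \<F>. hom F G = hom F H)"

definition cl :: "graph set \<Rightarrow> graph set" where
  "cl \<F> = {K. simple_graph K \<and>
     (\<forall>G H. simple_graph G \<longrightarrow> simple_graph H \<longrightarrow> hom_equiv \<F> G H \<longrightarrow> hom K G = hom K H)}"

text \<open>Full complement: same vertices; distinct u v adjacent iff not adjacent in G;
  v looped iff not looped in G.\<close>
definition full_compl :: "graph \<Rightarrow> graph" where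
  "full_compl G = (verts G, {(u, v) \<in> verts G \<times> verts G. (u, v) \<notin> edges G})"

definition closed_del_edges :: "graph set \<Rightarrow> bool" where
  "closed_del_edges \<F> \<longleftrightarrow>
     (\<forall>F \<in> \<F>. \<forall>E'. E' \<subseteq> edges F \<and> sym E' \<longrightarrow> (verts F, E') \<in> \<F>)"

definition closed_subgraphs :: "graph set \<Rightarrow> bool" where
  "closed_subgraphs \<F> \<longleftrightarrow>
     (\<forall>F \<in> \<F>. \<forall>V' E'. V' \<subseteq> verts F \<and> E' \<subseteq> edges F \<inter> (V' \<times> V') \<and> sym E'
        \<longrightarrow> (V', E') \<in> \<F>)"

definition compl_preserved :: "graph set \<Rightarrow> bool" where
  "compl_preserved \<F> \<longleftrightarrow>
     (\<forall>G H. simple_graph G \<longrightarrow> simple_graph H \<longrightarrow>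
        (hom_equiv \<F> G H \<longleftrightarrow> hom_equiv \<F> (full_compl G) (full_compl H)))"

end

(*
  (1) implies (2): by inclusion--exclusion over the edges of F, hom F (full_compl G) is an
  alternating sum of hom F' G over the spanning subgraphs F' of F, which belong to the class
  when it is closed under deleting edges.  The converse holds since the full complement is an
  involution.

  (2) implies (3): let K be in cl(F), F' a spanning subgraph of K and G, H equivalent.  For every
  graph X the tensor products G x X and H x X are simple and equivalent, so by (2) their full
  complements are equivalent and K cannot tell them apart.  Expanding both sides by
  inclusion--exclusion and using hom F' (G x X) = hom F' G * hom F' X gives a vanishing linear
  combination of the multiplicative functions X |-> hom F' X.  By Dedekind's independence
  lemma all its coefficients vanish; since spanning subgraphs with the same such function have
  the same number of edges, the coefficient belonging to F' is a nonzero multiple of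
  hom F' G - hom F' H.

  (3) implies (4): an isolated vertex multiplies hom _ G by the number of vertices of G, which is
  detected by the edgeless graphs in cl(F).  Finally cl(cl(F)) = cl(F), so (3) and (5) are
  equivalent by the first two implications applied to cl(F).
*)

theory Submission
  imports Defs "HOL-Library.Nat_Bijection" "HOL-Computational_Algebra.Polynomial"
begin

lemma verts_pair [simp]: "verts (V, E) = V"
  by (simp add: verts_def)

lemma edges_pair [simp]: "edges (V, E) = E"
  by (simp add: edges_def)

lemma simple_graph_is_graph: "simple_graph G \<Longrightarrow> is_graph G"
  by (simp add: simple_graph_def)

lemma finite_homs: "finite (verts F) \<Longrightarrow> finite (verts G) \<Longrightarrow> finite (homs F G)"
  unfolding homs_def by (rule finite_subset[OF _ finite_PiE[of "verts F" "\<lambda>_. verts G"]]) auto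

lemma hom_neq_0I:
  assumes "f \<in> homs F G" "finite (verts F)" "finite (verts G)"
  shows "hom F G \<noteq> 0"
  unfolding hom_def using assms finite_homs card_0_eq by blast

lemma homs_iff:
  "f \<in> homs F G \<longleftrightarrow>
    f \<in> verts F \<rightarrow>\<^sub>E verts G \<and> (\<forall>u v. (u, v) \<in> edges F \<longrightarrow> (f u, f v) \<in> edges G)"
  unfolding homs_def by blast

lemma edges_full_compl:
  "edges (full_compl G) = {(u, v) \<in> verts G \<times> verts G. (u, v) \<notin> edges G}"
  by (simp add: full_compl_def)

lemma verts_full_compl [simp]: "verts (full_compl G) = verts G"
  by (simp add: full_compl_def)

lemma is_graph_full_compl: "is_graph G \<Longrightarrow> is_graph (full_compl G)"
  unfolding is_graph_def edges_full_compl sym_def by auto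

lemma full_compl_full_compl: "is_graph G \<Longrightarrow> full_compl (full_compl G) = G"
  by (cases G) (auto simp: is_graph_def full_compl_def)

subsection \<open>Tensor product\<close>

text \<open>Vertices are natural numbers, so the vertex \<open>(a, x)\<close> of the product is represented by
  its code \<open>prod_encode (a, x)\<close>.\<close>

definition graph_tensor :: "graph \<Rightarrow> graph \<Rightarrow> graph" where
  "graph_tensor G X = (prod_decode -` (verts G \<times> verts X),
    {(p, q). (fst (prod_decode p), fst (prod_decode q)) \<in> edges G \<and>
             (snd (prod_decode p), snd (prod_decode q)) \<in> edges X})"

lemma verts_graph_tensor:
  "p \<in> verts (graph_tensor G X) \<longleftrightarrow> fst (prod_decode p) \<in> verts G \<and> snd (prod_decode p) \<in> verts X"
  by (simp add: graph_tensor_def mem_Times_iff)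

lemma edges_graph_tensor:
  "(p, q) \<in> edges (graph_tensor G X) \<longleftrightarrow>
     (fst (prod_decode p), fst (prod_decode q)) \<in> edges G \<and>
     (snd (prod_decode p), snd (prod_decode q)) \<in> edges X"
  by (simp add: graph_tensor_def)

lemma is_graph_graph_tensor:
  assumes "is_graph G" "is_graph X"
  shows "is_graph (graph_tensor G X)"
proof -
  have "finite (verts (graph_tensor G X))"
    unfolding graph_tensor_def verts_pair
    using assms by (intro finite_vimageI) (auto simp: is_graph_def inj_prod_decode)
  moreover have "edges (graph_tensor G X) \<subseteq> verts (graph_tensor G X) \<times> verts (graph_tensor G X)"
    using assms by (auto simp: is_graph_def verts_graph_tensor edges_graph_tensor)
  moreover have "sym (edges (graph_tensor G X))"
    using assms by (auto simp: is_graph_def sym_def edges_graph_tensor)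
  ultimately show ?thesis
    by (simp add: is_graph_def)
qed

lemma simple_graph_graph_tensor:
  assumes "is_graph G" "is_graph X" "simple_graph G \<or> simple_graph X"
  shows "simple_graph (graph_tensor G X)"
proof -
  have "(v, v) \<notin> edges (graph_tensor G X)" for v
    using assms(3) by (auto simp: simple_graph_def edges_graph_tensor)
  with assms(1,2) show ?thesis
    by (simp add: simple_graph_def is_graph_graph_tensor)
qed

lemma hom_graph_tensor:
  assumes F: "edges F \<subseteq> verts F \<times> verts F"
  shows "hom F (graph_tensor G X) = hom F G * hom F X"
proof -
  let ?split = "\<lambda>f. (\<lambda>v\<in>verts F. fst (prod_decode (f v)), \<lambda>v\<in>verts F. snd (prod_decode (f v)))"
  let ?pair = "\<lambda>(g, h). \<lambda>v\<in>verts F. prod_encode (g v, h v)"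
  have "bij_betw ?split (homs F (graph_tensor G X)) (homs F G \<times> homs F X)"
  proof (rule bij_betw_byWitness[where f' = ?pair])
    show "\<forall>f\<in>homs F (graph_tensor G X). ?pair (?split f) = f"
    proof
      fix f assume "f \<in> homs F (graph_tensor G X)"
      then have "f \<in> extensional (verts F)" by (simp add: homs_def PiE_def)
      then show "?pair (?split f) = f"
        by (simp add: fun_eq_iff extensional_def prod_decode_inverse)
    qed
    show "\<forall>gh\<in>homs F G \<times> homs F X. ?split (?pair gh) = gh"
    proof (intro ballI, elim SigmaE)
      fix gh g h assume "gh = (g, h)" "g \<in> homs F G" "h \<in> homs F X"
      then show "?split (?pair gh) = gh"
        by (simp add: homs_def PiE_def extensional_def fun_eq_iff prod_encode_inverse)
    qed
    have F_verts: "u \<in> verts F" "v \<in> verts F" if "(u, v) \<in> edges F" for u v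
      using F that by auto
    show "?split ` homs F (graph_tensor G X) \<subseteq> homs F G \<times> homs F X"
    proof (rule image_subsetI)
      fix f assume "f \<in> homs F (graph_tensor G X)"
      then show "?split f \<in> homs F G \<times> homs F X"
        by (auto simp: homs_iff PiE_iff verts_graph_tensor edges_graph_tensor F_verts)
    qed
    show "?pair ` (homs F G \<times> homs F X) \<subseteq> homs F (graph_tensor G X)"
    proof (rule image_subsetI)
      fix gh assume "gh \<in> homs F G \<times> homs F X"
      then show "?pair gh \<in> homs F (graph_tensor G X)"
        by (auto simp: homs_iff PiE_iff verts_graph_tensor edges_graph_tensor F_verts)
    qed
  qed
  then show ?thesis
    unfolding hom_def by (simp add: bij_betw_same_card card_cartesian_product)
qed

lemma hom_equiv_graph_tensor:
  assumes "\<forall>F\<in>\<F>. simple_graph F" "hom_equiv \<F> G H"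
  shows "hom_equiv \<F> (graph_tensor G X) (graph_tensor H X)"
  using assms by (auto simp: hom_equiv_def hom_graph_tensor simple_graph_def is_graph_def)

subsection \<open>Inclusion--exclusion over the edges\<close>

lemma prod_of_bool:
  "finite A \<Longrightarrow> (\<Prod>x\<in>A. of_bool (P x) :: 'a::comm_semiring_1) = of_bool (\<forall>x\<in>A. P x)"
  by (induction A rule: finite_induct) auto

lemma of_bool_ball_not_eq_sum:
  assumes "finite U"
  shows "(of_bool (\<forall>e\<in>U. \<not> P e) :: 'a::comm_ring_1) =
    (\<Sum>S\<in>Pow U. (-1) ^ card S * of_bool (\<forall>e\<in>S. P e))"
proof -
  have "(of_bool (\<forall>e\<in>U. \<not> P e) :: 'a) = (\<Prod>e\<in>U. - of_bool (P e) + 1)"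
    using assms by (simp add: prod_of_bool[symmetric] of_bool_not_iff)
  also have "\<dots> = (\<Sum>S\<in>Pow U. (\<Prod>e\<in>S. - of_bool (P e)) * (\<Prod>e\<in>U - S. 1))"
    using assms by (rule prod_add)
  also have "\<dots> = (\<Sum>S\<in>Pow U. (-1) ^ card S * of_bool (\<forall>e\<in>S. P e))"
    using assms by (intro sum.cong refl) (auto simp: prod_uminus prod_of_bool finite_subset)
  finally show ?thesis .
qed

lemma card_none_inclusion_exclusion:
  assumes "finite M" "finite U"
  shows "int (card {x\<in>M. \<forall>e\<in>U. \<not> P x e}) =
    (\<Sum>S\<in>Pow U. (-1) ^ card S * int (card {x\<in>M. \<forall>e\<in>S. P x e}))"
proof -
  have "int (card {x\<in>M. \<forall>e\<in>U. \<not> P x e}) = (\<Sum>x\<in>M. of_bool (\<forall>e\<in>U. \<not> P x e))"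
    using assms(1) by (simp add: Collect_conj_eq Int_commute)
  also have "\<dots> = (\<Sum>x\<in>M. \<Sum>S\<in>Pow U. (-1) ^ card S * of_bool (\<forall>e\<in>S. P x e))"
    using assms(2) by (simp add: of_bool_ball_not_eq_sum)
  also have "\<dots> = (\<Sum>S\<in>Pow U. (-1) ^ card S * (\<Sum>x\<in>M. of_bool (\<forall>e\<in>S. P x e)))"
    by (subst sum.swap) (simp add: sum_distrib_left)
  also have "\<dots> = (\<Sum>S\<in>Pow U. (-1) ^ card S * int (card {x\<in>M. \<forall>e\<in>S. P x e}))"
    using assms(1) by (simp add: Collect_conj_eq Int_commute)
  finally show ?thesis .
qed

text \<open>Spanning subgraphs of a simple graph are indexed by sets of unordered edges \<open>{u, v}\<close>, so
  that inclusion--exclusion runs over the subsets of \<open>uedges (edges F)\<close>.\<close>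

definition uedges :: "(nat \<times> nat) set \<Rightarrow> nat set set" where
  "uedges E = (\<lambda>(u, v). {u, v}) ` E"

definition edge_pairs :: "nat set set \<Rightarrow> (nat \<times> nat) set" where
  "edge_pairs S = {(u, v). u \<noteq> v \<and> {u, v} \<in> S}"

lemma mem_uedges: "e \<in> uedges E \<longleftrightarrow> (\<exists>u v. (u, v) \<in> E \<and> e = {u, v})"
  unfolding uedges_def by auto

lemma ball_uedges: "(\<forall>e\<in>uedges E. P e) \<longleftrightarrow> (\<forall>u v. (u, v) \<in> E \<longrightarrow> P {u, v})"
proof
  assume P: "\<forall>e\<in>uedges E. P e"
  show "\<forall>u v. (u, v) \<in> E \<longrightarrow> P {u, v}"
  proof (intro allI impI)
    fix u v assume "(u, v) \<in> E"
    then have "{u, v} \<in> uedges E"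
      unfolding uedges_def by (rule rev_image_eqI) simp
    with P show "P {u, v}" ..
  qed
qed (auto simp: uedges_def)

lemma sym_edge_pairs: "sym (edge_pairs S)"
  unfolding sym_def edge_pairs_def by (auto simp: insert_commute)

lemma edge_pairs_mono: "S \<subseteq> T \<Longrightarrow> edge_pairs S \<subseteq> edge_pairs T"
  unfolding edge_pairs_def by auto

lemma edge_pairs_uedges:
  assumes "sym E" "\<forall>v. (v, v) \<notin> E"
  shows "edge_pairs (uedges E) = E"
proof (intro equalityI subsetI; clarify)
  fix u v assume "(u, v) \<in> edge_pairs (uedges E)"
  then obtain a b where "(a, b) \<in> E" "{u, v} = {a, b}"
    by (auto simp: edge_pairs_def uedges_def)
  with assms(1) show "(u, v) \<in> E"
    by (auto simp: doubleton_eq_iff sym_def)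
next
  fix u v assume "(u, v) \<in> E"
  with assms(2) show "(u, v) \<in> edge_pairs (uedges E)"
    by (auto simp: edge_pairs_def uedges_def)
qed

lemma uedges_mono: "E \<subseteq> E' \<Longrightarrow> uedges E \<subseteq> uedges E'"
  unfolding uedges_def by auto

lemma finite_uedges: "finite E \<Longrightarrow> finite (uedges E)"
  unfolding uedges_def by simp

definition two_subsets :: "nat set \<Rightarrow> nat set set" where
  "two_subsets V = {e. e \<subseteq> V \<and> card e = 2}"

lemma finite_two_subsets: "finite V \<Longrightarrow> finite (two_subsets V)"
  unfolding two_subsets_def by (rule finite_subset[of _ "Pow V"]) auto

lemma uedges_subset_two_subsets:
  assumes "simple_graph K"
  shows "uedges (edges K) \<subseteq> two_subsets (verts K)"
proof
  fix e assume "e \<in> uedges (edges K)"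
  then obtain u v where uv: "(u, v) \<in> edges K" "e = {u, v}"
    unfolding mem_uedges by blast
  moreover from uv(1) have "u \<noteq> v" "u \<in> verts K" "v \<in> verts K"
    using assms by (auto simp: simple_graph_def is_graph_def)
  ultimately show "e \<in> two_subsets (verts K)"
    by (simp add: two_subsets_def)
qed

lemma ball_edge_pairs:
  assumes "S \<subseteq> two_subsets V"
  shows "(\<forall>e\<in>S. P e) \<longleftrightarrow> (\<forall>u v. (u, v) \<in> edge_pairs S \<longrightarrow> P {u, v})"
proof
  assume P: "\<forall>u v. (u, v) \<in> edge_pairs S \<longrightarrow> P {u, v}"
  show "\<forall>e\<in>S. P e"
  proof
    fix e assume "e \<in> S"
    with assms have "e \<in> two_subsets V"
      by blast
    then obtain u v where "e = {u, v}" "u \<noteq> v"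
      by (auto simp: two_subsets_def card_2_iff)
    with P \<open>e \<in> S\<close> show "P e"
      by (simp add: edge_pairs_def)
  qed
qed (simp add: edge_pairs_def)

lemma simple_graph_spanning:
  assumes "simple_graph F" "S \<subseteq> uedges (edges F)"
  shows "simple_graph (verts F, edge_pairs S)" "edge_pairs S \<subseteq> edges F"
proof -
  have "edge_pairs S \<subseteq> edge_pairs (uedges (edges F))"
    using assms(2) by (rule edge_pairs_mono)
  also have "\<dots> = edges F"
    using assms(1) by (simp add: edge_pairs_uedges simple_graph_def is_graph_def)
  finally show "edge_pairs S \<subseteq> edges F" .
  then show "simple_graph (verts F, edge_pairs S)"
    using assms sym_edge_pairs by (auto simp: simple_graph_def is_graph_def edge_pairs_def)
qed

lemma homs_full_compl_iff:
  assumes "edges F \<subseteq> verts F \<times> verts F"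
  shows "f \<in> homs F (full_compl G) \<longleftrightarrow>
    f \<in> verts F \<rightarrow>\<^sub>E verts G \<and> (\<forall>u v. (u, v) \<in> edges F \<longrightarrow> (f u, f v) \<notin> edges G)"
proof (cases "f \<in> verts F \<rightarrow>\<^sub>E verts G")
  case True
  have "(f u, f v) \<in> edges (full_compl G) \<longleftrightarrow> (f u, f v) \<notin> edges G"
    if "(u, v) \<in> edges F" for u v
  proof -
    have "u \<in> verts F" "v \<in> verts F"
      using that assms by auto
    then show ?thesis
      using PiE_mem[OF True] by (simp add: edges_full_compl)
  qed
  with True show ?thesis
    by (simp add: homs_iff)
qed (simp add: homs_iff)

lemma hom_full_compl_inclusion_exclusion:
  assumes F: "simple_graph F" and G: "is_graph G"
  shows "int (hom F (full_compl G)) =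
    (\<Sum>S\<in>Pow (uedges (edges F)). (-1) ^ card S * int (hom (verts F, edge_pairs S) G))"
proof -
  let ?M = "verts F \<rightarrow>\<^sub>E verts G"
  let ?U = "uedges (edges F)"
  define adj where "adj f e \<longleftrightarrow> (\<exists>u v. e = {u, v} \<and> (f u, f v) \<in> edges G)"
    for f :: "nat \<Rightarrow> nat" and e
  have EF: "edges F \<subseteq> verts F \<times> verts F" and fin: "finite (verts F)" "finite (verts G)"
    using F G by (simp_all add: simple_graph_def is_graph_def)
  have adj_pair: "adj f {u, v} \<longleftrightarrow> (f u, f v) \<in> edges G" for f u v
    using G by (auto simp: adj_def doubleton_eq_iff is_graph_def sym_def)
  have "homs F (full_compl G) = {f\<in>?M. \<forall>e\<in>?U. \<not> adj f e}"
    by (simp add: set_eq_iff homs_full_compl_iff[OF EF] ball_uedges adj_pair)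
  moreover have "homs (verts F, edge_pairs S) G = {f\<in>?M. \<forall>e\<in>S. adj f e}" if "S \<subseteq> ?U" for S
    using that uedges_subset_two_subsets[OF F]
    by (simp add: set_eq_iff homs_iff ball_edge_pairs[of S "verts F"] adj_pair)
  moreover have "finite ?M" "finite ?U"
    using fin finite_subset[OF EF] by (simp_all add: finite_PiE finite_uedges)
  ultimately show ?thesis
    unfolding hom_def by (simp add: card_none_inclusion_exclusion)
qed

lemma hom_equiv_full_compl:
  assumes \<F>: "\<forall>F\<in>\<F>. simple_graph F" "closed_del_edges \<F>"
    and "is_graph G" "is_graph H" "hom_equiv \<F> G H"
  shows "hom_equiv \<F> (full_compl G) (full_compl H)"
  unfolding hom_equiv_def
proof
  fix F assume "F \<in> \<F>"
  then have F: "simple_graph F"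
    using \<F>(1) by blast
  have "hom (verts F, edge_pairs S) G = hom (verts F, edge_pairs S) H" if "S \<subseteq> uedges (edges F)" for S
  proof -
    have "(verts F, edge_pairs S) \<in> \<F>"
      using \<F>(2) \<open>F \<in> \<F>\<close> simple_graph_spanning(2)[OF F that] sym_edge_pairs
      unfolding closed_del_edges_def by blast
    with assms(5) show ?thesis
      by (simp add: hom_equiv_def)
  qed
  then have "int (hom F (full_compl G)) = int (hom F (full_compl H))"
    using assms(3,4) by (simp add: hom_full_compl_inclusion_exclusion[OF F])
  then show "hom F (full_compl G) = hom F (full_compl H)"
    by simp
qed

lemma compl_preserved_if_closed_del_edges:
  assumes "\<forall>F\<in>\<F>. simple_graph F" "closed_del_edges \<F>"
  shows "compl_preserved \<F>"
  unfolding compl_preserved_def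
proof (intro allI impI iffI)
  fix G H assume "simple_graph G" "simple_graph H"
  then have G: "is_graph G" and H: "is_graph H"
    by (simp_all add: simple_graph_is_graph)
  show "hom_equiv \<F> (full_compl G) (full_compl H)" if "hom_equiv \<F> G H"
    using hom_equiv_full_compl[OF assms G H that] .
  show "hom_equiv \<F> G H" if "hom_equiv \<F> (full_compl G) (full_compl H)"
    using hom_equiv_full_compl[OF assms is_graph_full_compl[OF G] is_graph_full_compl[OF H] that]
    by (simp add: full_compl_full_compl G H)
qed

lemma simple_graph_if_in_cl: "K \<in> cl \<F> \<Longrightarrow> simple_graph K"
  by (simp add: cl_def)

lemma hom_eq_if_in_cl:
  "K \<in> cl \<F> \<Longrightarrow> simple_graph G \<Longrightarrow> simple_graph H \<Longrightarrow> hom_equiv \<F> G H \<Longrightarrow> hom K G = hom K H"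
  unfolding cl_def by blast

lemma subset_cl: "\<forall>F\<in>\<F>. simple_graph F \<Longrightarrow> \<F> \<subseteq> cl \<F>"
  by (auto simp: cl_def hom_equiv_def)

lemma hom_equiv_cl_iff:
  assumes "\<forall>F\<in>\<F>. simple_graph F" "simple_graph G" "simple_graph H"
  shows "hom_equiv (cl \<F>) G H \<longleftrightarrow> hom_equiv \<F> G H"
proof
  assume "hom_equiv (cl \<F>) G H"
  then show "hom_equiv \<F> G H"
    using subset_cl[OF assms(1)] unfolding hom_equiv_def by blast
next
  assume "hom_equiv \<F> G H"
  then show "hom_equiv (cl \<F>) G H"
    using hom_eq_if_in_cl assms(2,3) unfolding hom_equiv_def by blast
qed

lemma cl_cl:
  assumes "\<forall>F\<in>\<F>. simple_graph F"
  shows "cl (cl \<F>) = cl \<F>"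
  using hom_equiv_cl_iff[OF assms] by (simp add: cl_def)

text \<open>Tensoring with the loopless complete graph on the vertices of \<open>K\<close> makes any two graphs
  simple, while \<open>K\<close> still maps to that factor.\<close>

lemma hom_eq_if_in_cl_is_graph:
  assumes K: "K \<in> cl \<F>" and \<F>: "\<forall>F\<in>\<F>. simple_graph F"
    and A: "is_graph A" and B: "is_graph B" and AB: "hom_equiv \<F> A B"
  shows "hom K A = hom K B"
proof -
  have sK: "simple_graph K"
    using K by (rule simple_graph_if_in_cl)
  then have fK: "finite (verts K)" and EK: "edges K \<subseteq> verts K \<times> verts K"
    by (simp_all add: simple_graph_def is_graph_def)
  define C where "C = (verts K, {(u, v). u \<in> verts K \<and> v \<in> verts K \<and> u \<noteq> v})"
  have C: "simple_graph C"
    using fK by (auto simp: C_def simple_graph_def is_graph_def sym_def)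
  have "hom K (graph_tensor A C) = hom K (graph_tensor B C)"
  proof (rule hom_eq_if_in_cl[OF K])
    show "simple_graph (graph_tensor A C)" "simple_graph (graph_tensor B C)"
      using C A B by (simp_all add: simple_graph_graph_tensor simple_graph_is_graph)
    show "hom_equiv \<F> (graph_tensor A C) (graph_tensor B C)"
      using \<F> AB by (rule hom_equiv_graph_tensor)
  qed
  then have "hom K A * hom K C = hom K B * hom K C"
    by (simp add: hom_graph_tensor[OF EK])
  moreover have "hom K C \<noteq> 0"
    using sK EK fK by (intro hom_neq_0I[of "\<lambda>v\<in>verts K. v"]) (auto simp: homs_def C_def simple_graph_def)
  ultimately show ?thesis
    by simp
qed

subsection \<open>Linear independence of multiplicative functions\<close>

text \<open>Dedekind's lemma on the independence of characters, for functions that are multiplicative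
  with respect to a binary operation on a set \<open>A\<close>; functions are compared on \<open>A\<close> only.\<close>

lemma multiplicative_functions_independent:
  fixes P :: "('a \<Rightarrow> 'b::idom) set" and c :: "('a \<Rightarrow> 'b) \<Rightarrow> 'b"
    and mul :: "'a \<Rightarrow> 'a \<Rightarrow> 'a"
  assumes "finite P" "P \<subseteq> extensional A"
    and closed: "\<And>x y. x \<in> A \<Longrightarrow> y \<in> A \<Longrightarrow> mul x y \<in> A"
    and multiplicative: "\<And>\<psi> x y. \<psi> \<in> P \<Longrightarrow> x \<in> A \<Longrightarrow> y \<in> A \<Longrightarrow> \<psi> (mul x y) = \<psi> x * \<psi> y"
    and nonzero: "\<And>\<psi>. \<psi> \<in> P \<Longrightarrow> \<exists>x\<in>A. \<psi> x \<noteq> 0"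
    and relation: "\<And>x. x \<in> A \<Longrightarrow> (\<Sum>\<psi>\<in>P. c \<psi> * \<psi> x) = 0"
    and "\<psi> \<in> P"
  shows "c \<psi> = 0"
  using assms(1,2,4-7)
proof (induction P arbitrary: c \<psi> rule: finite_induct)
  case empty
  then show ?case by simp
next
  case (insert \<psi>0 P)
  have mult: "\<psi> (mul x y) = \<psi> x * \<psi> y" if "\<psi> \<in> insert \<psi>0 P" "x \<in> A" "y \<in> A" for \<psi> x y
    using insert.prems(2) that by blast
  have relation': "(\<Sum>\<psi>\<in>P. c \<psi> * \<psi> x) = - c \<psi>0 * \<psi>0 x" if "x \<in> A" for x
    using insert.prems(4)[OF that] insert.hyps by (simp add: add_eq_0_iff)
  text \<open>Substituting \<open>mul x y\<close> and subtracting \<open>\<psi>0 y\<close> times the relation at \<open>x\<close>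
    eliminates \<open>\<psi>0\<close>.\<close>
  have "c \<psi> * (\<psi> y - \<psi>0 y) = 0" if "\<psi> \<in> P" "y \<in> A" for \<psi> y
  proof (rule insert.IH[where c = "\<lambda>\<psi>. c \<psi> * (\<psi> y - \<psi>0 y)"])
    fix x assume "x \<in> A"
    have "(\<Sum>\<psi>\<in>P. c \<psi> * (\<psi> y - \<psi>0 y) * \<psi> x)
        = (\<Sum>\<psi>\<in>P. c \<psi> * (\<psi> x * \<psi> y)) - \<psi>0 y * (\<Sum>\<psi>\<in>P. c \<psi> * \<psi> x)"
      by (simp add: sum_distrib_left sum_subtractf[symmetric] algebra_simps)
    also have "(\<Sum>\<psi>\<in>P. c \<psi> * (\<psi> x * \<psi> y)) = (\<Sum>\<psi>\<in>P. c \<psi> * \<psi> (mul x y))"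
      using \<open>x \<in> A\<close> \<open>y \<in> A\<close> by (intro sum.cong refl) (simp add: mult)
    also have "\<dots> - \<psi>0 y * (\<Sum>\<psi>\<in>P. c \<psi> * \<psi> x) = 0"
      using \<open>x \<in> A\<close> \<open>y \<in> A\<close> by (simp add: relation' closed mult[of \<psi>0])
    finally show "(\<Sum>\<psi>\<in>P. c \<psi> * (\<psi> y - \<psi>0 y) * \<psi> x) = 0" .
  qed (use insert.prems that in auto)
  moreover have "\<exists>y\<in>A. \<psi> y \<noteq> \<psi>0 y" if "\<psi> \<in> P" for \<psi>
  proof (rule ccontr)
    assume "\<not> (\<exists>y\<in>A. \<psi> y \<noteq> \<psi>0 y)"
    moreover have "\<psi> \<in> extensional A" "\<psi>0 \<in> extensional A"
      using insert.prems(1) that by auto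
    ultimately have "\<psi> = \<psi>0"
      by (auto intro: extensionalityI)
    with that insert.hyps(2) show False
      by simp
  qed
  ultimately have c_P: "c \<psi> = 0" if "\<psi> \<in> P" for \<psi>
    using that by (metis eq_iff_diff_eq_0 mult_eq_0_iff)
  obtain x where "x \<in> A" "\<psi>0 x \<noteq> 0"
    using insert.prems(3) by blast
  then have "c \<psi>0 = 0"
    using relation'[of x] c_P by simp
  with c_P insert.prems(5) show ?case
    by blast
qed

lemma multiplicative_family_independent:
  fixes \<phi> :: "'i \<Rightarrow> 'a \<Rightarrow> 'b::idom" and mul :: "'a \<Rightarrow> 'a \<Rightarrow> 'a"
  assumes "finite I"
    and closed: "\<And>x y. x \<in> A \<Longrightarrow> y \<in> A \<Longrightarrow> mul x y \<in> A"
    and multiplicative: "\<And>i x y. i \<in> I \<Longrightarrow> x \<in> A \<Longrightarrow> y \<in> A \<Longrightarrow> \<phi> i (mul x y) = \<phi> i x * \<phi> i y"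
    and nonzero: "\<And>i. i \<in> I \<Longrightarrow> \<exists>x\<in>A. \<phi> i x \<noteq> 0"
    and relation: "\<And>x. x \<in> A \<Longrightarrow> (\<Sum>i\<in>I. c i * \<phi> i x) = 0"
    and "j \<in> I"
  shows "(\<Sum>i\<in>{i\<in>I. \<forall>x\<in>A. \<phi> i x = \<phi> j x}. c i) = 0"
proof -
  define fiber where "fiber \<psi> = {i\<in>I. restrict (\<phi> i) A = \<psi>}" for \<psi>
  define P where "P = (\<lambda>i. restrict (\<phi> i) A) ` I"
  have "(\<Sum>i\<in>fiber (restrict (\<phi> j) A). c i) = 0"
  proof (rule multiplicative_functions_independent
      [where A = A and mul = mul and P = P and c = "\<lambda>\<psi>. \<Sum>i\<in>fiber \<psi>. c i"])
    fix x assume "x \<in> A"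
    have "(\<Sum>\<psi>\<in>P. (\<Sum>i\<in>fiber \<psi>. c i) * \<psi> x) = (\<Sum>\<psi>\<in>P. \<Sum>i\<in>fiber \<psi>. c i * \<phi> i x)"
      unfolding sum_distrib_right
    proof (intro sum.cong refl)
      fix \<psi> i assume "i \<in> fiber \<psi>"
      then have "\<psi> = restrict (\<phi> i) A"
        by (simp add: fiber_def)
      with \<open>x \<in> A\<close> show "c i * \<psi> x = c i * \<phi> i x"
        by simp
    qed
    also have "\<dots> = (\<Sum>i\<in>I. c i * \<phi> i x)"
      unfolding fiber_def P_def using \<open>finite I\<close> by (rule sum.image_gen[symmetric])
    finally show "(\<Sum>\<psi>\<in>P. (\<Sum>i\<in>fiber \<psi>. c i) * \<psi> x) = 0"
      using relation[OF \<open>x \<in> A\<close>] by simp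
  qed (use assms in \<open>auto simp: P_def\<close>)
  moreover have "fiber (restrict (\<phi> j) A) = {i\<in>I. \<forall>x\<in>A. \<phi> i x = \<phi> j x}"
    by (auto simp: fiber_def fun_eq_iff restrict_def)
  ultimately show ?thesis
    by simp
qed

subsection \<open>Counting edges with homomorphism numbers\<close>

definition independent :: "(nat \<times> nat) set \<Rightarrow> nat set \<Rightarrow> bool" where
  "independent E I \<longleftrightarrow> (\<forall>u v. (u, v) \<in> E \<longrightarrow> u \<notin> I \<or> v \<notin> I)"

text \<open>The looped complete graph on \<open>{1..m}\<close> together with an unlooped apex \<open>0\<close> adjacent to
  everything: a homomorphism into it is an independent set (the preimage of the apex) together
  with an arbitrary map of the remaining vertices to \<open>{1..m}\<close>.\<close>

definition apex_graph :: "nat \<Rightarrow> graph" where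
  "apex_graph m = ({0..m}, {(a, b). a \<le> m \<and> b \<le> m \<and> (a \<noteq> 0 \<or> b \<noteq> 0)})"

lemma verts_apex_graph [simp]: "verts (apex_graph m) = {0..m}"
  by (simp add: apex_graph_def)

lemma is_graph_apex_graph: "is_graph (apex_graph m)"
  unfolding is_graph_def apex_graph_def sym_def by auto

lemma card_zero_set_eq:
  assumes "finite V" "I \<subseteq> V"
  shows "card {f \<in> V \<rightarrow>\<^sub>E {0..m}. {v\<in>V. f v = 0} = I} = m ^ card (V - I)"
proof -
  have "{f \<in> V \<rightarrow>\<^sub>E {0..m}. {v\<in>V. f v = 0} = I} = (\<Pi>\<^sub>E v\<in>V. if v \<in> I then {0} else {1..m})"
    using assms(2) by (auto simp: PiE_iff set_eq_iff)
  then have "card {f \<in> V \<rightarrow>\<^sub>E {0..m}. {v\<in>V. f v = 0} = I} = (\<Prod>v\<in>V. if v \<in> I then 1 else m)"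
    using assms(1) by (simp add: card_PiE if_distrib[of card] cong: if_cong)
  also have "\<dots> = m ^ card (V - I)"
    using assms by (simp add: prod.If_cases Diff_eq)
  finally show ?thesis .
qed

lemma homs_apex_graph:
  assumes "E \<subseteq> V \<times> V"
  shows "homs (V, E) (apex_graph m) = {f \<in> V \<rightarrow>\<^sub>E {0..m}. independent E {v\<in>V. f v = 0}}"
proof (intro set_eqI)
  fix f
  show "f \<in> homs (V, E) (apex_graph m) \<longleftrightarrow> f \<in> {f \<in> V \<rightarrow>\<^sub>E {0..m}. independent E {v\<in>V. f v = 0}}"
  proof (cases "f \<in> V \<rightarrow>\<^sub>E {0..m}")
    case True
    have "(f u, f v) \<in> edges (apex_graph m) \<longleftrightarrow> \<not> (u \<in> {v\<in>V. f v = 0} \<and> v \<in> {v\<in>V. f v = 0})"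
      if "(u, v) \<in> E" for u v
    proof -
      have "u \<in> V" "v \<in> V"
        using that assms by auto
      with PiE_mem[OF True] show ?thesis
        by (auto simp: apex_graph_def)
    qed
    with True show ?thesis
      by (simp add: homs_iff independent_def)
  qed (simp add: homs_iff apex_graph_def)
qed

lemma hom_apex_graph:
  assumes V: "finite V" and E: "E \<subseteq> V \<times> V"
  shows "hom (V, E) (apex_graph m) = (\<Sum>I\<in>{I\<in>Pow V. independent E I}. m ^ (card V - card I))"
proof -
  define zeros where "zeros I = {f \<in> V \<rightarrow>\<^sub>E {0..m}. {v\<in>V. f v = 0} = I}" for I
  have "homs (V, E) (apex_graph m) = (\<Union>I\<in>{I\<in>Pow V. independent E I}. zeros I)"
    by (intro set_eqI) (auto simp: homs_apex_graph[OF E] zeros_def)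
  then have "hom (V, E) (apex_graph m) = card (\<Union>I\<in>{I\<in>Pow V. independent E I}. zeros I)"
    by (simp add: hom_def)
  also have "\<dots> = (\<Sum>I\<in>{I\<in>Pow V. independent E I}. card (zeros I))"
  proof (rule card_UN_disjoint)
    show "\<forall>I\<in>{I\<in>Pow V. independent E I}. finite (zeros I)"
      unfolding zeros_def using V by (simp add: finite_PiE)
  qed (auto simp: V zeros_def)
  also have "\<dots> = (\<Sum>I\<in>{I\<in>Pow V. independent E I}. m ^ (card V - card I))"
    using V by (intro sum.cong refl) (auto simp: zeros_def card_zero_set_eq card_Diff_subset finite_subset)
  finally show ?thesis .
qed

definition independence_poly :: "nat set \<Rightarrow> (nat \<times> nat) set \<Rightarrow> int poly" where
  "independence_poly V E = (\<Sum>I\<in>{I\<in>Pow V. independent E I}. monom 1 (card V - card I))"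

lemma poly_independence_poly:
  "finite V \<Longrightarrow> E \<subseteq> V \<times> V \<Longrightarrow>
    poly (independence_poly V E) (int m) = int (hom (V, E) (apex_graph m))"
  by (simp add: independence_poly_def hom_apex_graph poly_sum poly_monom)

lemma independent_edge_pairs_doubleton:
  assumes "a \<noteq> b"
  shows "independent (edge_pairs S) {a, b} \<longleftrightarrow> {a, b} \<notin> S"
proof
  assume "independent (edge_pairs S) {a, b}"
  then have "(a, b) \<notin> edge_pairs S"
    by (auto simp: independent_def)
  with assms show "{a, b} \<notin> S"
    by (simp add: edge_pairs_def)
next
  assume "{a, b} \<notin> S"
  show "independent (edge_pairs S) {a, b}"
    unfolding independent_def
  proof (intro allI impI)
    fix u v assume "(u, v) \<in> edge_pairs S"
    then have "u \<noteq> v" "{u, v} \<in> S"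
      by (simp_all add: edge_pairs_def)
    with \<open>{a, b} \<notin> S\<close> show "u \<notin> {a, b} \<or> v \<notin> {a, b}"
      by (auto simp: insert_commute)
  qed
qed

lemma coeff_independence_poly:
  assumes V: "finite V" "2 \<le> card V"
  shows "coeff (independence_poly V (edge_pairs S)) (card V - 2) = int (card (two_subsets V - S))"
proof -
  have "card V - card I = card V - 2 \<longleftrightarrow> card I = 2" if "I \<subseteq> V" for I
    using V card_mono[OF V(1) that] by linarith
  then have "{I\<in>Pow V. independent (edge_pairs S) I} \<inter> {I. card V - card I = card V - 2}
      = {I\<in>two_subsets V. independent (edge_pairs S) I}"
    by (auto simp: two_subsets_def)
  also have "\<dots> = two_subsets V - S"
    by (auto simp: two_subsets_def card_2_iff independent_edge_pairs_doubleton)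
  finally show ?thesis
    using V(1) by (simp add: independence_poly_def coeff_sum coeff_monom of_bool_def[symmetric])
qed

lemma int_poly_eqI:
  fixes p q :: "int poly"
  assumes "\<And>m::nat. poly p (int m) = poly q (int m)"
  shows "p = q"
proof -
  have "range int \<subseteq> {x. poly (p - q) x = 0}"
    using assms by auto
  moreover have "infinite (range int)"
    using finite_imageD[OF _ inj_of_nat] by auto
  ultimately have "infinite {x. poly (p - q) x = 0}"
    using finite_subset by blast
  then show ?thesis
    using poly_roots_finite[of "p - q"] by auto
qed

lemma card_eq_if_hom_apex_graph_eq:
  assumes V: "finite V" and S: "S \<subseteq> two_subsets V" and T: "T \<subseteq> two_subsets V"
    and hom_eq: "\<And>m. hom (V, edge_pairs S) (apex_graph m) = hom (V, edge_pairs T) (apex_graph m)"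
  shows "card S = card T"
proof (cases "2 \<le> card V")
  case False
  have "e \<notin> two_subsets V" for e
  proof
    assume "e \<in> two_subsets V"
    then have "e \<subseteq> V" "card e = 2"
      by (simp_all add: two_subsets_def)
    with card_mono[OF V \<open>e \<subseteq> V\<close>] False show False
      by simp
  qed
  then have "two_subsets V = {}"
    by blast
  then show ?thesis
    using S T by simp
next
  case True
  have edges: "edge_pairs S \<subseteq> V \<times> V" "edge_pairs T \<subseteq> V \<times> V"
    using S T by (auto simp: edge_pairs_def two_subsets_def)
  have "independence_poly V (edge_pairs S) = independence_poly V (edge_pairs T)"
    using hom_eq by (intro int_poly_eqI) (simp add: poly_independence_poly[OF V] edges)
  then have "card (two_subsets V - S) = card (two_subsets V - T)"
    using coeff_independence_poly[OF V True] by (metis of_nat_eq_iff)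
  with S T finite_two_subsets[OF V] show ?thesis
    by (metis card_Diff_subset card_mono diff_diff_cancel finite_subset)
qed

subsection \<open>Deleting edges from graphs in \<open>cl\<close>\<close>

definition loop_graph :: graph where
  "loop_graph = ({0}, {(0, 0)})"

lemma is_graph_loop_graph: "is_graph loop_graph"
  by (simp add: loop_graph_def is_graph_def sym_def)

lemma hom_loop_graph:
  assumes "finite (verts F)" "edges F \<subseteq> verts F \<times> verts F"
  shows "hom F loop_graph = 1"
proof -
  have "homs F loop_graph = verts F \<rightarrow>\<^sub>E {0}"
    using assms(2) by (auto simp: homs_def loop_graph_def)
  then show ?thesis
    using assms(1) by (simp add: hom_def card_funcsetE)
qed

lemma hom_full_compl_graph_tensor:
  assumes K: "simple_graph K" and "is_graph A" "is_graph X"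
  shows "int (hom K (full_compl (graph_tensor A X))) = (\<Sum>S\<in>Pow (uedges (edges K)).
    (-1) ^ card S * (int (hom (verts K, edge_pairs S) A) * int (hom (verts K, edge_pairs S) X)))"
  unfolding hom_full_compl_inclusion_exclusion[OF K is_graph_graph_tensor[OF assms(2,3)]]
proof (intro sum.cong refl)
  fix S assume "S \<in> Pow (uedges (edges K))"
  then have "edges (verts K, edge_pairs S) \<subseteq> verts (verts K, edge_pairs S) \<times> verts (verts K, edge_pairs S)"
    using simple_graph_spanning(1)[OF K] by (simp add: simple_graph_def is_graph_def)
  then show "(-1) ^ card S * int (hom (verts K, edge_pairs S) (graph_tensor A X)) =
      (-1) ^ card S * (int (hom (verts K, edge_pairs S) A) * int (hom (verts K, edge_pairs S) X))"
    by (simp add: hom_graph_tensor)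
qed

lemma hom_spanning_eq_if_hom_full_compl_tensor_eq:
  assumes K: "simple_graph K" and G: "is_graph G" and H: "is_graph H"
    and compl_eq: "\<And>X. is_graph X \<Longrightarrow>
      hom K (full_compl (graph_tensor G X)) = hom K (full_compl (graph_tensor H X))"
    and S0: "S0 \<subseteq> uedges (edges K)"
  shows "hom (verts K, edge_pairs S0) G = hom (verts K, edge_pairs S0) H"
proof -
  let ?V = "verts K" and ?U = "uedges (edges K)"
  define \<phi> where "\<phi> S X = int (hom (?V, edge_pairs S) X)" for S X
  define \<delta> where "\<delta> S = \<phi> S G - \<phi> S H" for S
  define Q where "Q = {S\<in>Pow ?U. \<forall>X\<in>{X. is_graph X}. \<phi> S X = \<phi> S0 X}"
  have fin_V: "finite ?V" and fin_U: "finite ?U"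
    using K finite_subset[of "edges K" "?V \<times> ?V"]
    by (simp_all add: simple_graph_def is_graph_def finite_uedges)
  have spanning: "edge_pairs S \<subseteq> ?V \<times> ?V" if "S \<in> Pow ?U" for S
    using simple_graph_spanning(1)[OF K] that by (simp add: simple_graph_def is_graph_def)
  have "(\<Sum>S\<in>Q. (-1) ^ card S * \<delta> S) = 0"
    unfolding Q_def
  proof (rule multiplicative_family_independent[where mul = graph_tensor])
    fix X assume X: "X \<in> {X. is_graph X}"
    have "(\<Sum>S\<in>Pow ?U. (-1) ^ card S * \<delta> S * \<phi> S X)
        = int (hom K (full_compl (graph_tensor G X))) - int (hom K (full_compl (graph_tensor H X)))"
      using G H X
      by (simp add: hom_full_compl_graph_tensor[OF K] \<phi>_def \<delta>_def algebra_simps sum_subtractf)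
    also have "\<dots> = 0"
      using compl_eq X by simp
    finally show "(\<Sum>S\<in>Pow ?U. (-1) ^ card S * \<delta> S * \<phi> S X) = 0" .
  next
    fix S assume "S \<in> Pow ?U"
    then have "\<phi> S loop_graph = 1"
      using fin_V spanning by (simp add: \<phi>_def hom_loop_graph)
    then show "\<exists>X\<in>{X. is_graph X}. \<phi> S X \<noteq> 0"
      using is_graph_loop_graph by (intro bexI[of _ loop_graph]) simp_all
  qed (use fin_U S0 spanning in \<open>auto simp: \<phi>_def hom_graph_tensor is_graph_graph_tensor\<close>)
  moreover have "(-1) ^ card S * \<delta> S = (-1) ^ card S0 * \<delta> S0" if "S \<in> Q" for S
  proof -
    have S: "S \<subseteq> ?U" and same: "\<And>X. is_graph X \<Longrightarrow> \<phi> S X = \<phi> S0 X"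
      using that by (auto simp: Q_def)
    have "card S = card S0"
      using card_eq_if_hom_apex_graph_eq[OF fin_V] S S0 uedges_subset_two_subsets[OF K]
        same[OF is_graph_apex_graph]
      by (simp add: \<phi>_def)
    with same[OF G] same[OF H] show ?thesis
      by (simp add: \<delta>_def)
  qed
  ultimately have "card Q * ((-1) ^ card S0 * \<delta> S0) = 0"
    by simp
  moreover have "card Q \<noteq> 0"
    using S0 fin_U by (auto simp: Q_def)
  ultimately show ?thesis
    by (simp add: \<delta>_def \<phi>_def)
qed

lemma hom_full_compl_graph_tensor_eq_if_in_cl:
  assumes K: "K \<in> cl \<F>" and \<F>: "\<forall>F\<in>\<F>. simple_graph F" and compl: "compl_preserved \<F>"
    and G: "simple_graph G" and H: "simple_graph H" and GH: "hom_equiv \<F> G H" and X: "is_graph X"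
  shows "hom K (full_compl (graph_tensor G X)) = hom K (full_compl (graph_tensor H X))"
proof (rule hom_eq_if_in_cl_is_graph[OF K \<F>])
  have simple: "simple_graph (graph_tensor G X)" "simple_graph (graph_tensor H X)"
    using G H X by (simp_all add: simple_graph_graph_tensor simple_graph_is_graph)
  then show "is_graph (full_compl (graph_tensor G X))" "is_graph (full_compl (graph_tensor H X))"
    by (simp_all add: is_graph_full_compl simple_graph_is_graph)
  show "hom_equiv \<F> (full_compl (graph_tensor G X)) (full_compl (graph_tensor H X))"
    using compl[unfolded compl_preserved_def, rule_format, OF simple]
      hom_equiv_graph_tensor[OF \<F> GH] by simp
qed

lemma closed_del_edges_cl_if_compl_preserved:
  assumes \<F>: "\<forall>F\<in>\<F>. simple_graph F" and compl: "compl_preserved \<F>"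
  shows "closed_del_edges (cl \<F>)"
  unfolding closed_del_edges_def
proof (intro ballI allI impI)
  fix K E' assume K: "K \<in> cl \<F>" and E': "E' \<subseteq> edges K \<and> sym E'"
  have sK: "simple_graph K"
    using K by (rule simple_graph_if_in_cl)
  define S where "S = uedges E'"
  have S: "S \<subseteq> uedges (edges K)"
    using E' by (simp add: S_def uedges_mono)
  have "\<forall>v. (v, v) \<notin> E'"
    using E' sK by (auto simp: simple_graph_def)
  then have E'_eq: "edge_pairs S = E'"
    using E' by (simp add: S_def edge_pairs_uedges)
  have "hom (verts K, E') G = hom (verts K, E') H"
    if G: "simple_graph G" and H: "simple_graph H" and GH: "hom_equiv \<F> G H" for G H
    using hom_spanning_eq_if_hom_full_compl_tensor_eq[OF sK _ _ _ S]
      hom_full_compl_graph_tensor_eq_if_in_cl[OF K \<F> compl G H GH] G H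
    by (simp add: E'_eq simple_graph_is_graph)
  moreover have "simple_graph (verts K, E')"
    using simple_graph_spanning(1)[OF sK S] by (simp add: E'_eq)
  ultimately show "(verts K, E') \<in> cl \<F>"
    by (simp add: cl_def)
qed

subsection \<open>Deleting vertices\<close>

lemma homs_insert_isolated:
  assumes "x \<notin> V" "E \<subseteq> V \<times> V"
  shows "homs (insert x V, E) G = (\<lambda>(y, g). g(x := y)) ` (verts G \<times> homs (V, E) G)"
proof -
  have upd: "((g(x := y)) u, (g(x := y)) v) \<in> edges G \<longleftrightarrow> (g u, g v) \<in> edges G"
    if "(u, v) \<in> E" for g y u v
    using that assms by auto
  show ?thesis
  proof (intro equalityI subsetI)
    fix f assume f: "f \<in> homs (insert x V, E) G"
    then have "f \<in> (\<lambda>(y, g). g(x := y)) ` (verts G \<times> (V \<rightarrow>\<^sub>E verts G))"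
      by (simp add: homs_def PiE_insert_eq)
    then obtain y g where fg: "f = g(x := y)" "y \<in> verts G" "g \<in> V \<rightarrow>\<^sub>E verts G"
      by (auto elim!: imageE)
    with f upd have "g \<in> homs (V, E) G"
      by (simp add: homs_iff)
    with fg show "f \<in> (\<lambda>(y, g). g(x := y)) ` (verts G \<times> homs (V, E) G)"
      by (intro rev_image_eqI[of "(y, g)"]) simp_all
  next
    fix f assume "f \<in> (\<lambda>(y, g). g(x := y)) ` (verts G \<times> homs (V, E) G)"
    then obtain y g where "f = g(x := y)" "y \<in> verts G" "g \<in> homs (V, E) G"
      by (auto elim!: imageE)
    with upd show "f \<in> homs (insert x V, E) G"
      by (simp add: homs_iff PiE_fun_upd)
  qed
qed

lemma hom_insert_isolated:
  assumes "x \<notin> V" "E \<subseteq> V \<times> V"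
  shows "hom (insert x V, E) G = card (verts G) * hom (V, E) G"
proof -
  have "inj_on (\<lambda>(y, g). g(x := y)) (verts G \<times> homs (V, E) G)"
    by (rule inj_on_subset[OF inj_combinator[OF assms(1), of "\<lambda>_. verts G"]]) (auto simp: homs_def)
  then show ?thesis
    by (simp add: hom_def homs_insert_isolated[OF assms] card_image card_cartesian_product)
qed

lemma hom_add_isolated:
  assumes "finite W" "W \<inter> V = {}" "E \<subseteq> V \<times> V"
  shows "hom (V \<union> W, E) G = card (verts G) ^ card W * hom (V, E) G"
  using assms(1,2)
proof (induction W rule: finite_induct)
  case empty
  then show ?case by simp
next
  case (insert w W)
  have "hom (V \<union> insert w W, E) G = hom (insert w (V \<union> W), E) G"
    by simp
  also have "\<dots> = card (verts G) * hom (V \<union> W, E) G"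
    using insert assms(3) by (intro hom_insert_isolated) auto
  also have "\<dots> = card (verts G) ^ card (insert w W) * hom (V, E) G"
    using insert by simp
  finally show ?case .
qed

text \<open>The edgeless graph on \<open>V\<close> shows that \<open>G\<close> and \<open>H\<close> have equally many vertices, so the
  factor contributed by the isolated vertices \<open>V - V'\<close> cancels unless both graphs are empty.\<close>

lemma hom_eq_if_hom_eq_add_isolated:
  assumes V: "finite V" "V' \<subseteq> V" and E: "E \<subseteq> V' \<times> V'" and G: "is_graph G" and H: "is_graph H"
    and eq: "hom (V, E) G = hom (V, E) H" and eq_edgeless: "hom (V, {}) G = hom (V, {}) H"
  shows "hom (V', E) G = hom (V', E) H"
proof -
  let ?W = "V - V'"
  have V_split: "V = V' \<union> ?W" "?W \<inter> V' = {}" "finite ?W"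
    using V by auto
  have isolated: "hom (V, E) X = card (verts X) ^ card ?W * hom (V', E) X" for X
    using hom_add_isolated[OF V_split(3,2) E, of X] V_split(1) by simp
  have edgeless: "hom (V, {}) X = card (verts X) ^ card V" for X
    using hom_add_isolated[of V "{}" "{}" X] V by (simp add: hom_def homs_def)
  show ?thesis
  proof (cases "card ?W = 0")
    case True
    with eq show ?thesis
      by (simp add: isolated)
  next
    case False
    then have "card V \<noteq> 0"
      using V card_mono[of V ?W] by auto
    with eq_edgeless have same_card: "card (verts G) = card (verts H)"
      by (simp add: edgeless power_eq_iff_eq_base)
    show ?thesis
    proof (cases "card (verts G) = 0")
      case False
      with eq same_card show ?thesis
        by (simp add: isolated)
    next
      case True
      then have "verts G = {}" "verts H = {}"
        using same_card G H by (simp_all add: is_graph_def)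
      moreover then have "edges G = {}" "edges H = {}"
        using G H by (auto simp: is_graph_def)
      ultimately have "G = H"
        by (simp add: verts_def edges_def prod_eq_iff)
      then show ?thesis
        by simp
    qed
  qed
qed

lemma closed_subgraphs_cl_if_closed_del_edges:
  assumes del: "closed_del_edges (cl \<F>)"
  shows "closed_subgraphs (cl \<F>)"
  unfolding closed_subgraphs_def
proof (intro ballI allI impI)
  fix K V' E' assume K: "K \<in> cl \<F>" and sub: "V' \<subseteq> verts K \<and> E' \<subseteq> edges K \<inter> V' \<times> V' \<and> sym E'"
  then have V': "V' \<subseteq> verts K" and E'_K: "E' \<subseteq> edges K" and E'_V': "E' \<subseteq> V' \<times> V'"
    and sym: "sym E'"
    by simp_all
  have sK: "simple_graph K"
    using K by (rule simple_graph_if_in_cl)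
  have spanning: "(verts K, E'') \<in> cl \<F>" if "E'' \<subseteq> edges K" "sym E''" for E''
    using del K that unfolding closed_del_edges_def by blast
  have K_E': "(verts K, E') \<in> cl \<F>"
    using E'_K sym by (rule spanning)
  have K_edgeless: "(verts K, {}) \<in> cl \<F>"
    by (rule spanning) (simp_all add: sym_def)
  have fin: "finite (verts K)"
    using sK by (simp add: simple_graph_def is_graph_def)
  have "hom (V', E') G = hom (V', E') H"
    if G: "simple_graph G" and H: "simple_graph H" and GH: "hom_equiv \<F> G H" for G H
    using fin V' E'_V' simple_graph_is_graph[OF G] simple_graph_is_graph[OF H]
      hom_eq_if_in_cl[OF K_E' G H GH] hom_eq_if_in_cl[OF K_edgeless G H GH]
    by (rule hom_eq_if_hom_eq_add_isolated)
  moreover have "simple_graph (V', E')"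
    using sK V' E'_K E'_V' sym finite_subset[OF V' fin] by (auto simp: simple_graph_def is_graph_def)
  ultimately show "(V', E') \<in> cl \<F>"
    by (simp add: cl_def)
qed

lemma closed_del_edges_if_closed_subgraphs:
  assumes "\<forall>F\<in>\<F>. is_graph F" "closed_subgraphs \<F>"
  shows "closed_del_edges \<F>"
  using assms unfolding closed_del_edges_def closed_subgraphs_def is_graph_def by blast

theorem theorem13:
  fixes \<F> :: "graph set"
  assumes "\<forall>F \<in> \<F>. simple_graph F"
  shows "(closed_del_edges \<F> \<longrightarrow> compl_preserved \<F>)
    \<and> (compl_preserved \<F> \<longrightarrow> closed_del_edges (cl \<F>))
    \<and> (closed_del_edges (cl \<F>) \<longleftrightarrow> closed_subgraphs (cl \<F>))
    \<and> (closed_subgraphs (cl \<F>) \<longleftrightarrow> compl_preserved (cl \<F>))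
    \<and> (closed_del_edges (cl \<F>) \<longleftrightarrow> compl_preserved (cl \<F>))"
proof -
  have cl_simple: "\<forall>K\<in>cl \<F>. simple_graph K"
    by (simp add: simple_graph_if_in_cl)
  have "closed_del_edges (cl \<F>) \<longleftrightarrow> compl_preserved (cl \<F>)"
    using compl_preserved_if_closed_del_edges[OF cl_simple]
      closed_del_edges_cl_if_compl_preserved[OF cl_simple] cl_cl[OF assms]
    by auto
  moreover have "closed_del_edges (cl \<F>) \<longleftrightarrow> closed_subgraphs (cl \<F>)"
    using closed_subgraphs_cl_if_closed_del_edges closed_del_edges_if_closed_subgraphs cl_simple
    by (auto simp: simple_graph_is_graph)
  ultimately show ?thesis
    using compl_preserved_if_closed_del_edges[OF assms] closed_del_edges_cl_if_compl_preserved[OF assms]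
    by blast
qed

end
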